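(* Let $q$ be a power of an odd prime $p$, let $b\in\mathbb{F}_q$ with $b\ne0$, and let $n\ge2$ be an integer. Let $r\ge0$ be such that $p^r$ divides $n+1$ but $p^{r+1}$ does not, and let $m\ge0$ be defined by $n+1=p^r(m+1)$. Assume $r\ge1$. If $q>2m+4$, then there exists $a\in\mathbb{F}_q$ such that $\hat C_n(a,b)$ is LCD.
   Context: For $a,b\in\mathbb{F}_q$ and $n\ge 2$, $\hat T_n(a,b)$ denotes the $n\times n$ symmetric tridiagonal Toeplitz matrix over $\mathbb{F}_q$ with all diagonal entries equal to $a$, all entries on the first super- and sub-diagonals equal to $b$, and all other entries $0$. $\hat C_n(a,b)$ is the $[2n,n]$ linear code over $\mathbb{F}_q$ with generator matrix $[I_n\mid \hat T_n(a,b)]$. A linear code $C$ is LCD if $C\cap C^\perp=\{0\}$ (Euclidean dual). (The paper's statement writes $2^r$ here; it is interpreted via the characteristic $p$ as in Theorem 2.10, which the proof invokes.) *)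

theory Defs
  imports Main "HOL-Computational_Algebra.Primes"
begin

text \<open>Vectors of length N over a field are modelled as functions nat \<Rightarrow> 'a
  that vanish outside {0..<N}; matrices as functions nat \<Rightarrow> nat \<Rightarrow> 'a
  (entries outside the index range are irrelevant).\<close>

definition tridiag_toeplitz :: "nat \<Rightarrow> 'a::field \<Rightarrow> 'a \<Rightarrow> nat \<Rightarrow> nat \<Rightarrow> 'a" where
  "tridiag_toeplitz n a b i j =
     (if i < n \<and> j < n then
        (if i = j then a else if i = Suc j \<or> j = Suc i then b else 0)
      else 0)"

definition gen_IT :: "nat \<Rightarrow> 'a::field \<Rightarrow> 'a \<Rightarrow> nat \<Rightarrow> nat \<Rightarrow> 'a" where
  "gen_IT n a b i j =
     (if j < n then (if i = j then 1 else 0) else tridiag_toeplitz n a b i (j - n))"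

definition linear_code :: "nat \<Rightarrow> nat \<Rightarrow> (nat \<Rightarrow> nat \<Rightarrow> 'a::field) \<Rightarrow> (nat \<Rightarrow> 'a) set" where
  "linear_code N k G =
     {x. \<exists>u. x = (\<lambda>j. if j < N then (\<Sum>i<k. u i * G i j) else 0)}"

definition euclid_dual :: "nat \<Rightarrow> (nat \<Rightarrow> 'a::field) set \<Rightarrow> (nat \<Rightarrow> 'a) set" where
  "euclid_dual N C =
     {y. (\<forall>j\<ge>N. y j = 0) \<and> (\<forall>x\<in>C. (\<Sum>j<N. x j * y j) = 0)}"

definition is_LCD :: "nat \<Rightarrow> (nat \<Rightarrow> 'a::field) set \<Rightarrow> bool" where
  "is_LCD N C \<longleftrightarrow> C \<inter> euclid_dual N C = {(\<lambda>_. 0)}"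

definition C_hat :: "nat \<Rightarrow> 'a::field \<Rightarrow> 'a \<Rightarrow> (nat \<Rightarrow> 'a) set" where
  "C_hat n a b = linear_code (2 * n) n (gen_IT n a b)"

end

theory Submission
  imports Defs "HOL-Computational_Algebra.Polynomial"
begin

text \<open>The code with generator matrix [I | T] is LCD as soon as I + T T^T = I + T^2 is
  invertible. Over F[i] = F[X]/(X^2 + 1) the equations (I + T^2) u = 0 turn into the
  Lucas recurrence W(k+2) = x W(k+1) - W(k) with x = -(a + i)/b and W(0) = W(n+1) = 0, so
  I + T^2 is invertible once U(n+1)(x) is a unit. In characteristic p the identity
  U(p j) = U(j)^p (x^2 - 4)^((p-1)/2) shows that U(n+1) = U(p^r (m+1)) is a unit once
  U(m+1) and x^2 - 4 are. Their product has a norm that is a nonzero polynomial in a of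
  degree at most 2m + 4 < q, so some a in F avoids all of its roots.\<close>

datatype 'a gauss = Gauss (gauss_re: 'a) (gauss_im: 'a)

lemma gauss_eq_iff: "z = w \<longleftrightarrow> gauss_re z = gauss_re w \<and> gauss_im z = gauss_im w"
  by (cases z; cases w) auto

instantiation gauss :: (comm_ring_1) comm_ring_1
begin
definition "0 = Gauss 0 0"
definition "1 = Gauss 1 0"
definition "z + w = Gauss (gauss_re z + gauss_re w) (gauss_im z + gauss_im w)"
definition "z - w = Gauss (gauss_re z - gauss_re w) (gauss_im z - gauss_im w)"
definition "- z = Gauss (- gauss_re z) (- gauss_im z)"
definition "z * w = Gauss (gauss_re z * gauss_re w - gauss_im z * gauss_im w)
                          (gauss_re z * gauss_im w + gauss_im z * gauss_re w)"
instance
  by standard (simp_all add: gauss_eq_iff zero_gauss_def one_gauss_def plus_gauss_def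
      minus_gauss_def uminus_gauss_def times_gauss_def algebra_simps)
end

lemma gauss_simps [simp]:
  "gauss_re 0 = 0" "gauss_im 0 = 0" "gauss_re 1 = 1" "gauss_im 1 = 0"
  "gauss_re (z + w) = gauss_re z + gauss_re w" "gauss_im (z + w) = gauss_im z + gauss_im w"
  "gauss_re (z - w) = gauss_re z - gauss_re w" "gauss_im (z - w) = gauss_im z - gauss_im w"
  "gauss_re (- z) = - gauss_re z" "gauss_im (- z) = - gauss_im z"
  "gauss_re (z * w) = gauss_re z * gauss_re w - gauss_im z * gauss_im w"
  "gauss_im (z * w) = gauss_re z * gauss_im w + gauss_im z * gauss_re w"
  by (simp_all add: zero_gauss_def one_gauss_def plus_gauss_def minus_gauss_def
      uminus_gauss_def times_gauss_def)

lemma of_nat_gauss: "of_nat k = Gauss (of_nat k) 0"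
  by (induction k) (simp_all add: gauss_eq_iff)

lemma numeral_gauss: "numeral k = Gauss (numeral k) 0"
  using of_nat_gauss[of "numeral k"] by simp

lemma CHAR_gauss: "CHAR('a::comm_ring_1 gauss) = CHAR('a)"
  by (rule CHAR_eqI) (simp_all add: of_nat_gauss gauss_eq_iff of_nat_eq_0_iff_char_dvd)

definition gauss_norm :: "'a::comm_ring_1 gauss \<Rightarrow> 'a" where
  "gauss_norm z = gauss_re z * gauss_re z + gauss_im z * gauss_im z"

lemma gauss_norm_mult: "gauss_norm (z * w) = gauss_norm z * gauss_norm w"
  by (simp add: gauss_norm_def algebra_simps)

text \<open>F[i] need not be a field (when -1 is a square in F), so units are recognised
  through the norm.\<close>

lemma gauss_dvd_one_iff: "z dvd 1 \<longleftrightarrow> gauss_norm (z :: 'a::field gauss) \<noteq> 0"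
proof
  assume "z dvd 1"
  then obtain w where "1 = z * w" by (rule dvdE)
  then have "gauss_norm (z * w) = 1" by (simp flip: \<open>1 = z * w\<close> add: gauss_norm_def)
  then show "gauss_norm z \<noteq> 0" by (auto simp: gauss_norm_mult)
next
  assume N: "gauss_norm z \<noteq> 0"
  have "z * Gauss (gauss_re z * inverse (gauss_norm z)) (- gauss_im z * inverse (gauss_norm z))
      = Gauss (gauss_norm z * inverse (gauss_norm z)) 0"
    by (simp add: gauss_eq_iff gauss_norm_def algebra_simps)
  also have "\<dots> = 1" using N by (simp add: one_gauss_def)
  finally show "z dvd 1" by (rule dvdI[OF sym])
qed

text \<open>The Lucas sequence U(k) = U_k(y, 1), i.e. the Chebyshev polynomial U_(k-1)(y/2).\<close>

fun lucas_U :: "'a::comm_ring_1 \<Rightarrow> nat \<Rightarrow> 'a" where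
  "lucas_U y 0 = 0"
| "lucas_U y (Suc 0) = 1"
| "lucas_U y (Suc (Suc k)) = y * lucas_U y (Suc k) - lucas_U y k"

lemma lucas_U_hom:
  assumes "\<And>x y. f (x * y) = f x * f y" "\<And>x y. f (x - y) = f x - f y" "f 0 = 0" "f 1 = 1"
  shows "f (lucas_U y k) = lucas_U (f y) k"
  by (induction y k rule: lucas_U.induct) (simp_all add: assms)

lemma lucas_U_recurrence_solution:
  fixes W :: "nat \<Rightarrow> 'a::comm_ring_1"
  assumes "W 0 = 0" and "\<And>k. k < n \<Longrightarrow> W (k + 2) = y * W (k + 1) - W k"
    and "k \<le> n + 1"
  shows "W k = lucas_U y k * W 1"
proof -
  have pair: "W j = lucas_U y j * W 1 \<and> W (Suc j) = lucas_U y (Suc j) * W 1" if "j \<le> n" for j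
    using that
  proof (induction j)
    case (Suc j)
    then show ?case using assms(2)[of j] by (simp add: algebra_simps)
  qed (simp add: assms(1))
  show ?thesis
  proof (cases k)
    case (Suc j)
    then show ?thesis using pair[of j] assms(3) by simp
  qed (simp add: assms(1))
qed

lemma recurrence_zero_if_lucas_U_dvd_one:
  fixes W :: "nat \<Rightarrow> 'a::comm_ring_1"
  assumes "W 0 = 0" and "W (Suc n) = 0"
    and "\<And>k. k < n \<Longrightarrow> W (k + 2) = y * W (k + 1) - W k"
    and "lucas_U y (Suc n) dvd 1" and "k \<le> n + 1"
  shows "W k = 0"
proof -
  have "lucas_U y (Suc n) * W 1 = 0"
    using lucas_U_recurrence_solution[OF assms(1,3), where k = "Suc n"] assms(2) by simp
  moreover obtain c where "1 = lucas_U y (Suc n) * c" using assms(4) by (rule dvdE)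
  ultimately have "W 1 = 0" by (metis mult.commute mult.left_commute mult_1 mult_zero_right)
  then show ?thesis using lucas_U_recurrence_solution[OF assms(1,3,5)] by simp
qed

lemma lucas_U_power_dvd:
  fixes v y P :: "'a::comm_ring_1"
  assumes "P dvd v^2 - y * v + 1"
  shows "P dvd v ^ Suc k - (lucas_U y (Suc k) * v - lucas_U y k)"
proof (induction k)
  case (Suc k)
  have "v ^ Suc (Suc k) - (lucas_U y (Suc (Suc k)) * v - lucas_U y (Suc k))
      = v * (v ^ Suc k - (lucas_U y (Suc k) * v - lucas_U y k))
        + lucas_U y (Suc k) * (v^2 - y * v + 1)"
    by (simp add: algebra_simps power2_eq_square)
  then show ?case using Suc assms by (simp add: dvd_add dvd_mult)
qed simp

lemma lucas_U_binet_dvd: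
  fixes z w y P :: "'a::comm_ring_1"
  assumes "P dvd z^2 - y * z + 1" and "P dvd w^2 - y * w + 1"
  shows "P dvd (z ^ k - w ^ k) - lucas_U y k * (z - w)"
proof (cases k)
  case (Suc j)
  have split: "(z ^ k - w ^ k) - lucas_U y k * (z - w)
      = (z ^ Suc j - (lucas_U y (Suc j) * z - lucas_U y j))
        - (w ^ Suc j - (lucas_U y (Suc j) * w - lucas_U y j))"
    by (simp add: Suc algebra_simps)
  show ?thesis
    unfolding split by (intro dvd_diff lucas_U_power_dvd assms)
qed simp

lemma dvd_power_diff: "P dvd a - b \<Longrightarrow> P dvd a ^ k - (b ^ k :: 'a::comm_ring_1)"
  unfolding power_diff_sumr2 by (rule dvd_mult2)

lemma monic_dvd_imp_degree_le:
  fixes P Q :: "'a::comm_ring_1 poly"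
  assumes "lead_coeff P = 1" and "P dvd Q" and "Q \<noteq> 0"
  shows "degree P \<le> degree Q"
proof -
  obtain R where Q: "Q = P * R" using assms(2) by (rule dvdE)
  with assms(3) have "R \<noteq> 0" by auto
  have "coeff Q (degree P + degree R) = lead_coeff R"
    using coeff_mult_degree_sum[of P R] assms(1) Q by simp
  with \<open>R \<noteq> 0\<close> have "degree P + degree R \<le> degree Q"
    by (intro le_degree) simp
  then show ?thesis by simp
qed

lemma two_dvd_one_if_odd_CHAR:
  assumes "odd CHAR('a::comm_ring_1)"
  shows "(2 :: 'a) dvd 1"
proof -
  have "(2 :: 'a) * of_nat ((CHAR('a) + 1) div 2) = of_nat (2 * ((CHAR('a) + 1) div 2))"
    by simp
  also have "\<dots> = of_nat (CHAR('a) + 1)" using assms by simp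
  also have "\<dots> = 1" by simp
  finally show ?thesis by (rule dvdI[OF sym])
qed

lemma diff_power_prime_CHAR:
  fixes a b :: "'a::comm_ring_1"
  assumes "prime CHAR('a)"
  shows "(a - b) ^ CHAR('a) = a ^ CHAR('a) - b ^ CHAR('a)"
proof -
  have "(a + - b) ^ CHAR('a) = a ^ CHAR('a) + (- b) ^ CHAR('a)"
    by (rule freshmans_dream) (simp_all add: assms)
  also have "(- b) ^ CHAR('a) = - (b ^ CHAR('a))"
    by (rule minus_power_prime_CHAR) (simp_all add: assms)
  finally show ?thesis by simp
qed

lemma monic_quadratic_dvd_smult_linear:
  fixes P :: "'a::comm_ring_1 poly"
  assumes "lead_coeff P = 1" and "degree P = 2" and "c dvd 1" and "P dvd smult e [:c0, c:]"
  shows "e = 0"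
proof (rule ccontr)
  assume "e \<noteq> 0"
  obtain c' where "1 = c * c'" using assms(3) by (rule dvdE)
  then have "e = (c * c') * e" by simp
  then have "e = c' * (e * c)" by (simp only: ac_simps)
  with \<open>e \<noteq> 0\<close> have "coeff (smult e [:c0, c:]) 1 \<noteq> 0" by auto
  then have "smult e [:c0, c:] \<noteq> 0" by (metis coeff_0)
  with assms(1,4) have "degree P \<le> degree (smult e [:c0, c:])"
    by (rule monic_dvd_imp_degree_le)
  moreover have "degree (smult e [:c0, c:]) \<le> 1" by simp
  ultimately show False using assms(2) by simp
qed

text \<open>Binet's formula holds modulo P = X^2 - y X + 1, whose roots X and y - X differ
  by d with d^2 = y^2 - 4 modulo P; the Frobenius map does the rest, and the resulting
  multiple of d is divisible by the monic quadratic P only if it vanishes.\<close>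

lemma lucas_U_CHAR_mult:
  fixes y :: "'a::comm_ring_1"
  assumes prime: "prime CHAR('a)" and odd: "odd CHAR('a)"
  shows "lucas_U y (CHAR('a) * j) = lucas_U y j ^ CHAR('a) * (y^2 - 4) ^ ((CHAR('a) - 1) div 2)"
proof -
  define p h where "p = CHAR('a)" and "h = (CHAR('a) - 1) div 2"
  have p: "p = Suc (2 * h)" using odd by (simp add: p_def h_def)
  define D where "D = y^2 - 4"
  define P z w :: "'a poly" where "P = [:1, -y, 1:]" and "z = [:0, 1:]" and "w = [:y, -1:]"
  define d where "d = z - w"
  have root_z: "P dvd z^2 - [:y:] * z + 1" and root_w: "P dvd w^2 - [:y:] * w + 1"
    by (simp_all add: P_def z_def w_def power2_eq_square one_pCons algebra_simps)
  have lucas_U_const: "lucas_U [:y:] k = [:lucas_U y k:]" for k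
    using lucas_U_hom[of "\<lambda>x. [:x:]" y k] by simp
  have binet: "P dvd (z ^ k - w ^ k) - smult (lucas_U y k) d" for k
    using lucas_U_binet_dvd[OF root_z root_w, of k] by (simp add: lucas_U_const d_def)
  have frobenius: "z ^ (p * j) - w ^ (p * j) = (z ^ j - w ^ j) ^ p"
    using diff_power_prime_CHAR[of "z ^ j" "w ^ j"] prime
    by (simp add: p_def power_mult mult.commute)
  have square_d: "P dvd (d^2) ^ h - [:D:] ^ h"
  proof (rule dvd_power_diff)
    have "d^2 - [:D:] = P * [:4:]"
      by (simp add: d_def z_def w_def P_def D_def power2_eq_square one_pCons algebra_simps)
    then show "P dvd d^2 - [:D:]" by (metis dvd_triv_left)
  qed
  have power_p: "(smult (lucas_U y j) d) ^ p = smult (lucas_U y j ^ p) (d * (d^2) ^ h)"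
    by (simp only: p power_Suc power_mult) (simp add: smult_power mult.commute)
  have "(z ^ (p * j) - w ^ (p * j)) - smult (lucas_U y j ^ p * D ^ h) d
      = ((z ^ j - w ^ j) ^ p - (smult (lucas_U y j) d) ^ p)
        + smult (lucas_U y j ^ p) (d * ((d^2) ^ h - [:D:] ^ h))"
    unfolding frobenius power_p by (simp add: poly_const_pow smult_diff_right algebra_simps)
  also have "P dvd \<dots>"
    using dvd_power_diff[OF binet[of j]] square_d by (intro dvd_add dvd_smult dvd_mult)
  finally have "P dvd (z ^ (p * j) - w ^ (p * j)) - smult (lucas_U y j ^ p * D ^ h) d" .
  from dvd_diff[OF this binet[of "p * j"]]
  have "P dvd smult (lucas_U y (p * j) - lucas_U y j ^ p * D ^ h) d"
    by (simp add: smult_diff_left)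
  moreover have "d = [:- y, 2:]" by (simp add: d_def z_def w_def)
  ultimately have "lucas_U y (p * j) - lucas_U y j ^ p * D ^ h = 0"
    using two_dvd_one_if_odd_CHAR[OF odd]
    by (intro monic_quadratic_dvd_smult_linear[of P 2 _ "- y"]) (simp_all add: P_def)
  then show ?thesis by (simp add: p_def h_def D_def)
qed

lemma lucas_U_CHAR_power_mult_dvd_one:
  fixes y :: "'a::comm_ring_1"
  assumes "prime CHAR('a)" and "odd CHAR('a)"
    and "lucas_U y M dvd 1" and "y^2 - 4 dvd 1"
  shows "lucas_U y (CHAR('a) ^ r * M) dvd 1"
proof (induction r)
  case (Suc r)
  have "lucas_U y (CHAR('a) ^ Suc r * M)
      = lucas_U y (CHAR('a) ^ r * M) ^ CHAR('a) * (y^2 - 4) ^ ((CHAR('a) - 1) div 2)"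
    using lucas_U_CHAR_mult[OF assms(1,2)] by (simp add: mult.assoc)
  also have "\<dots> dvd 1 ^ CHAR('a) * 1 ^ ((CHAR('a) - 1) div 2)"
    using Suc assms(4) by (intro mult_dvd_mono dvd_power_same)
  finally show ?case by simp
qed (simp add: assms(3))

lemma coeff_mult_at_degree_bound:
  fixes p q :: "'a::comm_semiring_0 poly"
  assumes "degree p \<le> k" and "degree q \<le> l"
  shows "coeff (p * q) (k + l) = coeff p k * coeff q l"
proof (cases "degree p = k \<and> degree q = l")
  case True
  then show ?thesis using coeff_mult_degree_sum[of p q] by simp
next
  case False
  then have "degree (p * q) < k + l" using assms degree_mult_le[of p q] by linarith
  moreover have "coeff p k * coeff q l = 0"
    using False assms by (auto simp: coeff_eq_0)
  ultimately show ?thesis by (simp add: coeff_eq_0)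
qed

definition gauss_poly_lead :: "'a::comm_ring_1 poly gauss \<Rightarrow> nat \<Rightarrow> 'a \<Rightarrow> bool" where
  "gauss_poly_lead z k c \<longleftrightarrow>
     degree (gauss_re z) \<le> k \<and> coeff (gauss_re z) k = c \<and>
     degree (gauss_im z) \<le> k \<and> coeff (gauss_im z) k = 0"

lemma gauss_poly_lead_mult:
  assumes "gauss_poly_lead z k c" and "gauss_poly_lead w l d"
  shows "gauss_poly_lead (z * w) (k + l) (c * d)"
  using assms unfolding gauss_poly_lead_def
  by (simp add: coeff_mult_at_degree_bound degree_add_le degree_diff_le degree_mult_le
      order.trans[OF degree_mult_le] add_mono)

lemma gauss_poly_lead_diff:
  assumes "gauss_poly_lead z k c" and "gauss_poly_lead w k d"
  shows "gauss_poly_lead (z - w) k (c - d)"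
  using assms unfolding gauss_poly_lead_def by (simp add: degree_diff_le)

lemma gauss_poly_lead_mono:
  assumes "gauss_poly_lead z k c" and "k < l"
  shows "gauss_poly_lead z l 0"
  using assms unfolding gauss_poly_lead_def by (simp add: coeff_eq_0)

lemma gauss_poly_lead_lucas_U:
  assumes "gauss_poly_lead x 1 c"
  shows "gauss_poly_lead (lucas_U x (Suc k)) k (c ^ k) \<and> gauss_poly_lead (lucas_U x k) k 0"
proof (induction k)
  case 0
  show ?case by (simp add: gauss_poly_lead_def)
next
  case (Suc k)
  then have IH1: "gauss_poly_lead (lucas_U x (Suc k)) k (c ^ k)"
    and IH2: "gauss_poly_lead (lucas_U x k) k 0" by blast+
  have "gauss_poly_lead (x * lucas_U x (Suc k)) (1 + k) (c * c ^ k)"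
    by (rule gauss_poly_lead_mult[OF assms IH1])
  moreover have "gauss_poly_lead (lucas_U x k) (Suc k) 0"
    by (rule gauss_poly_lead_mono[OF IH2]) simp
  ultimately have "gauss_poly_lead (x * lucas_U x (Suc k) - lucas_U x k) (Suc k) (c * c ^ k - 0)"
    by (intro gauss_poly_lead_diff) simp_all
  moreover have "gauss_poly_lead (lucas_U x (Suc k)) (Suc k) 0"
    by (rule gauss_poly_lead_mono[OF IH1]) simp
  ultimately show ?case by simp
qed

lemma gauss_norm_poly_lead:
  assumes "gauss_poly_lead z k c"
  shows "degree (gauss_norm z) \<le> 2 * k" and "coeff (gauss_norm z) (2 * k) = c ^ 2"
  using assms unfolding gauss_poly_lead_def gauss_norm_def mult_2
  by (simp_all add: coeff_mult_at_degree_bound power2_eq_square degree_add_le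
      order.trans[OF degree_mult_le] add_mono)

lemma exists_nonroot:
  fixes P :: "'a::{finite,idom} poly"
  assumes "P \<noteq> 0" and "degree P < card (UNIV :: 'a set)"
  obtains a where "poly P a \<noteq> 0"
proof -
  have "{a. poly P a = 0} \<noteq> UNIV"
    using card_poly_roots_bound[OF assms(1)] assms(2) by auto
  then show ?thesis using that by blast
qed

lemma exists_lucas_U_dvd_one:
  fixes b :: "'a::{finite,field}"
  assumes "b \<noteq> 0" and "2 * m + 4 < card (UNIV :: 'a set)"
  obtains a
  where "lucas_U (Gauss (- a / b) (- 1 / b)) (Suc m) * ((Gauss (- a / b) (- 1 / b))^2 - 4) dvd 1"
proof -
  define X :: "'a poly gauss" where "X = Gauss [:0, - 1 / b:] [:- 1 / b:]"
  define Q where "Q = lucas_U X (Suc m) * (X^2 - 4)"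
  have X: "gauss_poly_lead X 1 (- 1 / b)"
    by (simp add: X_def gauss_poly_lead_def)
  have "gauss_poly_lead (4 :: 'a poly gauss) (1 + 1) 0"
    by (simp add: gauss_poly_lead_def numeral_gauss numeral_poly coeff_pCons split: nat.split)
  then have "gauss_poly_lead (X * X - 4) (1 + 1) (- 1 / b * (- 1 / b) - 0)"
    by (rule gauss_poly_lead_diff[OF gauss_poly_lead_mult[OF X X]])
  then have "gauss_poly_lead (X^2 - 4) 2 (1 / b ^ 2)"
    by (simp add: power2_eq_square numeral_2_eq_2)
  then have "gauss_poly_lead Q (m + 2) ((- 1 / b) ^ m * (1 / b ^ 2))"
    unfolding Q_def by (rule gauss_poly_lead_mult[OF conjunct1[OF gauss_poly_lead_lucas_U[OF X]]])
  from gauss_norm_poly_lead[OF this]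
  have "gauss_norm Q \<noteq> 0" and "degree (gauss_norm Q) < card (UNIV :: 'a set)"
    using assms by (auto simp: coeff_0[symmetric])
  then obtain a where a: "poly (gauss_norm Q) a \<noteq> 0" by (rule exists_nonroot)
  define ev where "ev = map_gauss (\<lambda>p. poly p a)"
  have ev_mult: "ev (z * w) = ev z * ev w" and ev_diff: "ev (z - w) = ev z - ev w" for z w
    by (simp_all add: ev_def gauss_eq_iff gauss.map_sel)
  have ev_consts: "ev 0 = 0" "ev 1 = 1" "ev 4 = 4"
    by (simp_all add: ev_def gauss_eq_iff gauss.map_sel numeral_gauss)
  have "ev Q = lucas_U (ev X) (Suc m) * (ev X ^ 2 - 4)"
    unfolding Q_def using lucas_U_hom[of ev X "Suc m"]
    by (simp add: ev_mult ev_diff ev_consts power2_eq_square)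
  moreover have "ev X = Gauss (- a / b) (- 1 / b)"
    by (simp add: ev_def X_def)
  moreover have "gauss_norm (ev Q) = poly (gauss_norm Q) a"
    by (simp add: ev_def gauss_norm_def gauss.map_sel)
  ultimately have "gauss_norm (lucas_U (Gauss (- a / b) (- 1 / b)) (Suc m)
      * ((Gauss (- a / b) (- 1 / b))^2 - 4)) \<noteq> 0"
    using a by simp
  then show ?thesis by (intro that) (simp add: gauss_dvd_one_iff)
qed

lemma is_LCD_linear_code:
  fixes G :: "nat \<Rightarrow> nat \<Rightarrow> 'a::field"
  assumes gram_inj:
    "\<And>u. \<forall>k<K. (\<Sum>j<N. G k j * (\<Sum>i<K. u i * G i j)) = 0 \<Longrightarrow> \<forall>i<K. u i = 0"
  shows "is_LCD N (linear_code N K G)"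
proof -
  define enc where "enc u = (\<lambda>j. if j < N then \<Sum>i<K. u i * G i j else 0)" for u
  have code: "linear_code N K G = range enc"
    unfolding linear_code_def enc_def by auto
  have "x = (\<lambda>_. 0)" if x: "x \<in> range enc" "x \<in> euclid_dual N (range enc)" for x
  proof -
    obtain u where u: "x = enc u" using x(1) by blast
    have "(\<Sum>j<N. G k j * (\<Sum>i<K. u i * G i j)) = 0" if "k < K" for k
    proof -
      have "enc (\<lambda>i. if i = k then 1 else 0) j = G k j" if "j < N" for j
        using \<open>k < K\<close> that by (simp add: enc_def if_distrib[of "\<lambda>c. c * _"] cong: if_cong)
      moreover have "(\<Sum>j<N. enc (\<lambda>i. if i = k then 1 else 0) j * x j) = 0"
        using x(2) by (auto simp: euclid_dual_def)
      ultimately show ?thesis by (simp add: u enc_def)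
    qed
    then have "\<forall>i<K. u i = 0" using gram_inj by blast
    then show ?thesis by (simp add: u enc_def fun_eq_iff)
  qed
  moreover have "(\<lambda>_. 0) = enc (\<lambda>_. 0)" by (simp add: enc_def fun_eq_iff)
  ultimately show ?thesis
    unfolding is_LCD_def code by (auto simp: euclid_dual_def)
qed

lemma sum_lessThan_add: "(\<Sum>j<m + (n::nat). f j) = (\<Sum>j<m. f j) + (\<Sum>l<n. f (m + l))"
  by (induction n) (simp_all add: add.assoc)

lemma gen_IT_gram:
  assumes "k < n"
  shows "(\<Sum>j<2 * n. gen_IT n a b k j * (\<Sum>i<n. u i * gen_IT n a b i j))
       = u k + (\<Sum>l<n. tridiag_toeplitz n a b k l *
                         (\<Sum>i<n. u i * tridiag_toeplitz n a b i l))"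
proof -
  have "(\<Sum>j<n. gen_IT n a b k j * (\<Sum>i<n. u i * gen_IT n a b i j))
      = (\<Sum>j<n. if j = k then u j else 0)"
    by (rule sum.cong) (simp_all add: gen_IT_def if_distrib[of "\<lambda>c. _ * c"] cong: if_cong)
  also have "\<dots> = u k" using assms by simp
  finally show ?thesis by (simp add: mult_2 sum_lessThan_add gen_IT_def)
qed

lemma tridiag_toeplitz_sym: "tridiag_toeplitz n a b i j = tridiag_toeplitz n a b j i"
  unfolding tridiag_toeplitz_def by auto

lemma tridiag_toeplitz_apply:
  fixes f :: "nat \<Rightarrow> 'a::field"
  assumes "f 0 = 0" and "\<forall>k>n. f k = 0" and "l < n"
  shows "(\<Sum>i<n. f (Suc i) * tridiag_toeplitz n a b i l)
       = b * f l + a * f (Suc l) + b * f (Suc (Suc l))"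
proof -
  have "(\<Sum>i<n. f (Suc i) * tridiag_toeplitz n a b i l)
      = (\<Sum>i<n. (if Suc i = l then b * f l else 0) + (if i = l then a * f (Suc l) else 0)
               + (if i = Suc l then b * f (Suc (Suc l)) else 0))"
    by (rule sum.cong) (use assms(3) in \<open>auto simp: tridiag_toeplitz_def\<close>)
  also have "\<dots> = (\<Sum>i<n. if Suc i = l then b * f l else 0)
                   + a * f (Suc l) + b * f (Suc (Suc l))"
    using assms by (simp add: sum.distrib)
  also have "(\<Sum>i<n. if Suc i = l then b * f l else 0) = b * f l"
  proof (cases l)
    case (Suc l')
    then have "(\<Sum>i<n. if Suc i = l then b * f l else 0)
        = (\<Sum>i<n. if i = l' then b * f l else 0)"
      by (intro sum.cong) auto
    then show ?thesis using Suc assms(3) by simp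
  qed (simp add: assms(1))
  finally show ?thesis .
qed

text \<open>With v = T u, the entries of W(k) = u(k-1) + i v(k-1), padded by W(0) = W(n+1) = 0,
  satisfy the Lucas recurrence with multiplier x = -(a + i)/b.\<close>

lemma tridiag_toeplitz_gram_kernel:
  fixes a b :: "'a::field"
  assumes "b \<noteq> 0" and unit: "lucas_U (Gauss (- a / b) (- 1 / b)) (Suc n) dvd 1"
    and ker: "\<forall>k<n. u k + (\<Sum>l<n. tridiag_toeplitz n a b k l *
                               (\<Sum>i<n. u i * tridiag_toeplitz n a b i l)) = 0"
  shows "\<forall>k<n. u k = 0"
proof -
  let ?T = "tridiag_toeplitz n a b"
  define v where "v l = (\<Sum>i<n. u i * ?T i l)" for l
  define pad where "pad w k = (if 0 < k \<and> k \<le> n then w (k - 1) else 0)"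
    for w :: "nat \<Rightarrow> 'a" and k
  define x where "x = Gauss (- a / b) (- 1 / b)"
  define W where "W k = Gauss (pad u k) (pad v k)" for k
  have pad_apply: "(\<Sum>i<n. pad w (Suc i) * ?T i l)
      = b * pad w l + a * pad w (Suc l) + b * pad w (Suc (Suc l))" if "l < n" for w l
    using tridiag_toeplitz_apply[of "pad w" n l a b] that by (simp add: pad_def)
  have v_eq: "pad v (Suc k) = b * pad u k + a * pad u (Suc k) + b * pad u (Suc (Suc k))"
    if "k < n" for k
  proof -
    have "pad v (Suc k) = (\<Sum>i<n. pad u (Suc i) * ?T i k)"
      using that by (simp add: pad_def v_def)
    then show ?thesis using pad_apply[OF that] by simp
  qed
  have u_eq: "pad u (Suc k) + (b * pad v k + a * pad v (Suc k) + b * pad v (Suc (Suc k))) = 0"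
    if "k < n" for k
  proof -
    have "(\<Sum>l<n. ?T k l * v l) = (\<Sum>l<n. pad v (Suc l) * ?T l k)"
      by (rule sum.cong) (simp_all add: pad_def tridiag_toeplitz_sym[of n a b k] mult.commute)
    also have "\<dots> = b * pad v k + a * pad v (Suc k) + b * pad v (Suc (Suc k))"
      by (rule pad_apply[OF that])
    finally have "u k + (b * pad v k + a * pad v (Suc k) + b * pad v (Suc (Suc k))) = 0"
      using ker that unfolding v_def by metis
    moreover have "pad u (Suc k) = u k" using that by (simp add: pad_def)
    ultimately show ?thesis by simp
  qed
  have recurrence: "W (k + 2) = x * W (k + 1) - W k" if "k < n" for k
  proof -
    have "pad u (Suc (Suc k)) = - a / b * pad u (Suc k) + pad v (Suc k) / b - pad u k"
      using v_eq[OF that] \<open>b \<noteq> 0\<close> by (simp add: field_simps)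
    moreover have "pad v (Suc (Suc k)) = - a / b * pad v (Suc k) - pad u (Suc k) / b - pad v k"
      using u_eq[OF that] \<open>b \<noteq> 0\<close> by (simp add: field_simps eq_neg_iff_add_eq_0 add_ac)
    ultimately show ?thesis by (simp add: W_def x_def gauss_eq_iff)
  qed
  have "W (Suc k) = 0" if "k < n" for k
  proof (rule recurrence_zero_if_lucas_U_dvd_one[OF _ _ recurrence])
    show "W 0 = 0" and "W (Suc n) = 0" by (simp_all add: W_def pad_def zero_gauss_def)
    show "lucas_U x (Suc n) dvd 1" using unit by (simp add: x_def)
    show "Suc k \<le> n + 1" using that by simp
  qed
  then show ?thesis by (simp add: W_def pad_def gauss_eq_iff)
qed

lemma is_LCD_C_hat:
  fixes a b :: "'a::field"
  assumes "b \<noteq> 0" and "lucas_U (Gauss (- a / b) (- 1 / b)) (Suc n) dvd 1"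
  shows "is_LCD (2 * n) (C_hat n a b)"
  unfolding C_hat_def
proof (rule is_LCD_linear_code)
  fix u :: "nat \<Rightarrow> 'a"
  assume "\<forall>k<n. (\<Sum>j<2 * n. gen_IT n a b k j * (\<Sum>i<n. u i * gen_IT n a b i j)) = 0"
  then have "\<forall>k<n. u k + (\<Sum>l<n. tridiag_toeplitz n a b k l *
                             (\<Sum>i<n. u i * tridiag_toeplitz n a b i l)) = 0"
    by (simp add: gen_IT_gram)
  then show "\<forall>i<n. u i = 0" by (rule tridiag_toeplitz_gram_kernel[OF assms])
qed

theorem corollary2p6:
  fixes b :: "'a::{finite,field}" and p q n r m :: nat
  assumes "prime p" and "odd p" and "CHAR('a) = p" and "card (UNIV :: 'a set) = q"
    and "b \<noteq> 0" and "n \<ge> 2"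
    and "p ^ r dvd (n + 1)" and "\<not> p ^ (r + 1) dvd (n + 1)"
    and "n + 1 = p ^ r * (m + 1)"
    and "r \<ge> 1"
    and "q > 2 * m + 4"
  shows "\<exists>a::'a. is_LCD (2 * n) (C_hat n a b)"
proof -
  obtain a where unit: "lucas_U (Gauss (- a / b) (- 1 / b)) (Suc m)
      * ((Gauss (- a / b) (- 1 / b))^2 - 4) dvd 1"
    using exists_lucas_U_dvd_one[OF assms(5)] assms(4,11) by blast
  have "lucas_U (Gauss (- a / b) (- 1 / b)) (CHAR('a gauss) ^ r * Suc m) dvd 1"
    using unit assms(1-3)
    by (intro lucas_U_CHAR_power_mult_dvd_one)
      (auto simp: CHAR_gauss dest: dvd_mult_left dvd_mult_right)
  then have "lucas_U (Gauss (- a / b) (- 1 / b)) (Suc n) dvd 1"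
    using assms(3,9) by (simp add: CHAR_gauss)
  then show ?thesis using is_LCD_C_hat[OF assms(5)] by blast
qed

end
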